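(* Let $X=\{X(t)\}_{t\in[0,1]}$ be a centered second-order stochastic process with trajectories in $L^2[0,1]$ which is sample-continuous (all trajectories are continuous functions). Let $\Theta=\bigcup_{p\ge1}\Theta_p$ with $\Theta_p=\mathbb{R}^p\times[0,1]^p\times\mathbb{R}\times\mathbb{R}^+_0$, generic element $\theta=(\beta_1,\dots,\beta_p,t_1,\dots,t_p,\alpha_0,\sigma^2)$, equipped with the metric $d(\theta,\theta')=\min\{\|\theta-\theta'\|,1\}$ if $\theta,\theta'$ lie in the same $\Theta_p$ and $1$ otherwise, and its Borel $\sigma$-algebra. For $\theta\in\Theta_p$ let $P_\theta$ be the distribution on $L^2[0,1]\times\mathbb{R}$ of $(X,Y)$, where $X$ has the law of the process and $Y\mid X\sim\mathcal N(\alpha_0+\sum_{j=1}^p\beta_jX(t_j),\sigma^2)$. Then the map $\theta\mapsto P_\theta(A)$ is measurable for every measurable set $A\subseteq L^2[0,1]\times\mathbb{R}$. *)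

theory Defs
  imports "HOL-Probability.Probability"
begin

text \<open>Parameters theta = (beta_1..beta_p, t_1..t_p, alpha_0, sigma^2), represented as
  (list of betas, list of t's, alpha0, sigma2).\<close>
type_synonym theta = "real list \<times> real list \<times> real \<times> real"

definition ThetaSet :: "theta set" where
  "ThetaSet = {(b, t, a, s). length b = length t \<and> 1 \<le> length b \<and> set t \<subseteq> {0..1} \<and> 0 \<le> s}"

definition theta_dist :: "theta \<Rightarrow> theta \<Rightarrow> real" where
  "theta_dist th th' = (case th of (b, t, a, s) \<Rightarrow> case th' of (b', t', a', s') \<Rightarrow>
     if length b = length b'
     then min (sqrt ((\<Sum>j<length b. (b!j - b'!j)^2) + (\<Sum>j<length t. (t!j - t'!j)^2)
                     + (a - a')^2 + (s - s')^2)) 1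
     else 1)"

definition pm_opens :: "'x set \<Rightarrow> ('x \<Rightarrow> 'x \<Rightarrow> real) \<Rightarrow> 'x set set" where
  "pm_opens S d = {U. U \<subseteq> S \<and> (\<forall>x\<in>U. \<exists>e>0. \<forall>y\<in>S. d x y < e \<longrightarrow> y \<in> U)}"

definition Theta_M :: "theta measure" where
  "Theta_M = sigma ThetaSet (pm_opens ThetaSet theta_dist)"

text \<open>L^2[0,1]: square-integrable functions on [0,1] (values outside [0,1] ignored),
  with the L^2 pseudometric and its Borel sigma-algebra.\<close>
definition L2set :: "(real \<Rightarrow> real) set" where
  "L2set = {f. (\<lambda>x. indicator {0..1} x * f x) \<in> borel_measurable lborel \<and>
               integrable lborel (\<lambda>x. indicator {0..1} x * (f x)^2)}"

definition L2_dist :: "(real \<Rightarrow> real) \<Rightarrow> (real \<Rightarrow> real) \<Rightarrow> real" where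
  "L2_dist f g = sqrt (\<integral>x. indicator {0..1} x * (f x - g x)^2 \<partial>lborel)"

definition L2M :: "(real \<Rightarrow> real) measure" where
  "L2M = sigma L2set (pm_opens L2set L2_dist)"

definition gauss :: "real \<Rightarrow> real \<Rightarrow> real measure" where
  "gauss m s2 = (if s2 = 0 then return borel m else density lborel (normal_density m (sqrt s2)))"

definition reg_mean :: "theta \<Rightarrow> (real \<Rightarrow> real) \<Rightarrow> real" where
  "reg_mean th f = (case th of (b, t, a, s) \<Rightarrow> a + (\<Sum>j<length b. b!j * f (t!j)))"

definition theta_s2 :: "theta \<Rightarrow> real" where
  "theta_s2 th = snd (snd (snd th))"

definition P_theta :: "'w measure \<Rightarrow> ('w \<Rightarrow> real \<Rightarrow> real) \<Rightarrow> theta \<Rightarrow> ((real \<Rightarrow> real) \<times> real) measure" where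
  "P_theta M X th = M \<bind> (\<lambda>w. distr (gauss (reg_mean th (X w)) (theta_s2 th)) (L2M \<Otimes>\<^sub>M borel) (\<lambda>y. (X w, y)))"

end

theory Submission
  imports Defs
begin

(*
  By definition P\<^sub>\<theta> is the bind of the law M of the process with the kernel sending
  (\<theta>, w) to the image of N(reg_mean \<theta> (X w), \<sigma>\<^sup>2) under y \<mapsto> (X w, y). Since bind is
  measurable in its kernel, it suffices that this kernel is measurable on \<Theta> \<times> \<Omega> with
  values in the Giry monad. A Gaussian is an affine image of the standard normal, so this
  reduces to measurability of the mean and the variance. The coordinates of \<theta> are
  1-Lipschitz for d on pairs at distance below 1, hence Borel; and (\<theta>, w) \<mapsto> X w (t\<^sub>j)
  is jointly measurable because t\<^sub>j can be approximated from below by grid points, at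
  which X is measurable in w, and X is continuous in t.
*)

lemma gauss_eq_distr_std_normal:
  assumes "0 \<le> s2"
  shows "gauss m s2 = distr (density lborel std_normal_density) borel (\<lambda>z. m + sqrt s2 * z)"
proof -
  interpret N: prob_space "density lborel std_normal_density"
    by (rule prob_space_normal_density) simp
  show ?thesis
  proof (cases "s2 = 0")
    case False
    then have "0 < sqrt s2" using assms by simp
    moreover have "distributed (density lborel std_normal_density) lborel (\<lambda>z. z) std_normal_density"
      by (simp add: distributed_def distr_id2)
    ultimately have "distributed (density lborel std_normal_density) lborel (\<lambda>z. m + sqrt s2 * z)
        (normal_density m (sqrt s2))"
      using N.normal_density_affine[of "\<lambda>z. z" 0 1 "sqrt s2" m] by simp
    then have "distr (density lborel std_normal_density) lborel (\<lambda>z. m + sqrt s2 * z)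
        = density lborel (normal_density m (sqrt s2))"
      by (simp add: distributed_def)
    then show ?thesis
      using False by (simp add: gauss_def cong: distr_cong)
  qed (simp add: gauss_def)
qed

lemma measurable_gauss:
  assumes [measurable]: "m \<in> borel_measurable N" "s2 \<in> borel_measurable N"
    and "\<And>x. x \<in> space N \<Longrightarrow> 0 \<le> s2 x"
  shows "(\<lambda>x. gauss (m x) (s2 x)) \<in> N \<rightarrow>\<^sub>M subprob_algebra borel"
proof -
  have "density lborel std_normal_density \<in> space (subprob_algebra borel)"
    using prob_space_normal_density[of 1 0]
    by (auto simp: space_subprob_algebra prob_space_imp_subprob_space)
  then have "(\<lambda>x. distr (density lborel std_normal_density) borel (\<lambda>z. m x + sqrt (s2 x) * z))
      \<in> N \<rightarrow>\<^sub>M subprob_algebra borel"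
    by (intro measurable_distr2[where M = borel]) auto
  then show ?thesis
    by (rule measurable_cong[THEN iffD1, rotated]) (simp add: gauss_eq_distr_std_normal assms(3))
qed

lemma space_sigma_pm_opens [simp]: "space (sigma S (pm_opens S d)) = S"
  by (simp add: space_measure_of_conv)

lemma pm_opens_in_sets: "U \<in> pm_opens S d \<Longrightarrow> U \<in> sets (sigma S (pm_opens S d))"
  by (rule in_measure_of) (auto simp: pm_opens_def)

lemma measurable_sigma_pm_opens_continuous:
  fixes \<phi> :: "'x \<Rightarrow> real"
  assumes cont: "\<And>x e. x \<in> S \<Longrightarrow> 0 < e \<Longrightarrow> \<exists>\<delta>>0. \<forall>y\<in>S. d x y < \<delta> \<longrightarrow> \<bar>\<phi> y - \<phi> x\<bar> < e"
  shows "\<phi> \<in> borel_measurable (sigma S (pm_opens S d))"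
  unfolding borel_measurable_iff_less
proof
  fix a
  have "{x \<in> S. \<phi> x < a} \<in> pm_opens S d"
    unfolding pm_opens_def
  proof safe
    fix x assume "x \<in> S" "\<phi> x < a"
    with cont[of x "a - \<phi> x"] obtain \<delta> where
      "\<delta> > 0" "\<forall>y\<in>S. d x y < \<delta> \<longrightarrow> \<bar>\<phi> y - \<phi> x\<bar> < a - \<phi> x"
      by auto
    then show "\<exists>e>0. \<forall>y\<in>S. d x y < e \<longrightarrow> y \<in> {x \<in> S. \<phi> x < a}"
      by force
  qed
  then show "{x \<in> space (sigma S (pm_opens S d)). \<phi> x < a} \<in> sets (sigma S (pm_opens S d))"
    by (simp add: pm_opens_in_sets)
qed

lemma measurable_sigma_pm_opens_lipschitz:
  fixes \<phi> :: "'x \<Rightarrow> real"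
  assumes "\<And>x y. x \<in> S \<Longrightarrow> y \<in> S \<Longrightarrow> d x y < 1 \<Longrightarrow> \<bar>\<phi> y - \<phi> x\<bar> \<le> d x y"
  shows "\<phi> \<in> borel_measurable (sigma S (pm_opens S d))"
proof (rule measurable_sigma_pm_opens_continuous)
  fix x and e :: real assume "x \<in> S" "0 < e"
  then show "\<exists>\<delta>>0. \<forall>y\<in>S. d x y < \<delta> \<longrightarrow> \<bar>\<phi> y - \<phi> x\<bar> < e"
    using assms[of x] by (intro exI[of _ "min e 1"]) force
qed

lemma measurable_sigma_pm_opens_locally_constant:
  fixes f :: "'x \<Rightarrow> 'a::countable"
  assumes "\<And>x. x \<in> S \<Longrightarrow> \<exists>\<delta>>0. \<forall>y\<in>S. d x y < \<delta> \<longrightarrow> f y = f x"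
  shows "f \<in> sigma S (pm_opens S d) \<rightarrow>\<^sub>M count_space UNIV"
proof (subst measurable_count_space_eq2_countable, safe)
  fix a
  have "{x \<in> S. f x = a} \<in> pm_opens S d"
    using assms by (fastforce simp: pm_opens_def)
  moreover have "f -` {a} \<inter> S = {x \<in> S. f x = a}"
    by auto
  ultimately show "f -` {a} \<inter> space (sigma S (pm_opens S d)) \<in> sets (sigma S (pm_opens S d))"
    by (simp add: pm_opens_in_sets)
qed auto

definition theta_p :: "theta \<Rightarrow> nat" where
  "theta_p th = length (fst th)"

text \<open>Padding with 0 beyond index p keeps the coordinates 1-Lipschitz, since parameters
  at distance below 1 have the same p.\<close>

definition theta_beta :: "nat \<Rightarrow> theta \<Rightarrow> real" where
  "theta_beta j th = (if j < theta_p th then fst th ! j else 0)"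

definition theta_t :: "nat \<Rightarrow> theta \<Rightarrow> real" where
  "theta_t j th = (if j < theta_p th then fst (snd th) ! j else 0)"

definition theta_alpha :: "theta \<Rightarrow> real" where
  "theta_alpha th = fst (snd (snd th))"

lemma space_Theta_M [simp]: "space Theta_M = ThetaSet"
  by (simp add: Theta_M_def)

lemma theta_t_in_unit_interval:
  assumes "th \<in> ThetaSet"
  shows "theta_t j th \<in> {0..1}"
proof -
  have "set (fst (snd th)) \<subseteq> {0..1}" "length (fst (snd th)) = theta_p th"
    using assms by (auto simp: ThetaSet_def theta_p_def)
  then have "fst (snd th) ! j \<in> {0..1}" if "j < theta_p th"
    using that by (metis nth_mem subsetD)
  then show ?thesis
    by (simp add: theta_t_def)
qed

lemma reg_mean_eq_coordinates:
  "th \<in> ThetaSet \<Longrightarrow>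
    reg_mean th f = theta_alpha th + (\<Sum>j<theta_p th. theta_beta j th * f (theta_t j th))"
  by (auto simp: ThetaSet_def reg_mean_def theta_alpha_def theta_p_def theta_beta_def theta_t_def)

lemma theta_coordinates_lipschitz:
  assumes "x \<in> ThetaSet" "y \<in> ThetaSet" and near: "theta_dist x y < 1"
  shows "theta_p y = theta_p x"
    and "\<bar>theta_beta j y - theta_beta j x\<bar> \<le> theta_dist x y"
    and "\<bar>theta_t j y - theta_t j x\<bar> \<le> theta_dist x y"
    and "\<bar>theta_alpha y - theta_alpha x\<bar> \<le> theta_dist x y"
    and "\<bar>theta_s2 y - theta_s2 x\<bar> \<le> theta_dist x y"
proof -
  obtain b t a s b' t' a' s' where xy: "x = (b, t, a, s)" "y = (b', t', a', s')"
    by (cases x, cases y) auto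
  have lengths: "length t = length b" "length t' = length b'"
    using assms(1,2) by (auto simp: ThetaSet_def xy)
  define S where "S = (\<Sum>j<length b. (b!j - b'!j)^2) + (\<Sum>j<length t. (t!j - t'!j)^2)
    + (a - a')^2 + (s - s')^2"
  have same_p: "length b' = length b"
    using near by (auto simp: theta_dist_def xy split: if_splits)
  then have dist: "theta_dist x y = sqrt S"
    using near by (auto simp: theta_dist_def xy S_def min_def split: if_splits)
  have sums: "0 \<le> (\<Sum>j<length b. (b!j - b'!j)^2)" "0 \<le> (\<Sum>j<length t. (t!j - t'!j)^2)"
    by (auto intro: sum_nonneg)
  have S_bounds: "(\<Sum>j<length b. (b!j - b'!j)^2) \<le> S" "(\<Sum>j<length t. (t!j - t'!j)^2) \<le> S"
    "(a - a')^2 \<le> S" "(s - s')^2 \<le> S"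
    using sums zero_le_power2[of "a - a'"] zero_le_power2[of "s - s'"] unfolding S_def by linarith+
  have bound: "\<bar>v\<bar> \<le> theta_dist x y" if "v^2 \<le> S" for v
    using real_sqrt_le_mono[OF that] by (simp add: dist)
  have entry: "(if j < length u then (u!j - u'!j)^2 else 0) \<le> (\<Sum>j<length u. (u!j - u'!j)^2)"
    for u u' :: "real list"
    by (auto intro: member_le_sum sum_nonneg)
  show "theta_p y = theta_p x"
    using same_p by (simp add: theta_p_def xy)
  have "(theta_beta j y - theta_beta j x)^2 = (if j < length b then (b!j - b'!j)^2 else 0)"
    by (simp add: theta_beta_def theta_p_def xy same_p power2_commute)
  then show "\<bar>theta_beta j y - theta_beta j x\<bar> \<le> theta_dist x y"
    using entry[of b b'] S_bounds(1) by (intro bound) linarith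
  have "(theta_t j y - theta_t j x)^2 = (if j < length t then (t!j - t'!j)^2 else 0)"
    by (simp add: theta_t_def theta_p_def xy same_p lengths power2_commute)
  then show "\<bar>theta_t j y - theta_t j x\<bar> \<le> theta_dist x y"
    using entry[of t t'] S_bounds(2) by (intro bound) linarith
  show "\<bar>theta_alpha y - theta_alpha x\<bar> \<le> theta_dist x y"
    using S_bounds(3) by (intro bound) (simp add: theta_alpha_def xy power2_commute)
  show "\<bar>theta_s2 y - theta_s2 x\<bar> \<le> theta_dist x y"
    using S_bounds(4) by (intro bound) (simp add: theta_s2_def xy power2_commute)
qed

lemma measurable_theta_p [measurable]: "theta_p \<in> Theta_M \<rightarrow>\<^sub>M count_space UNIV"
  unfolding Theta_M_def
proof (rule measurable_sigma_pm_opens_locally_constant)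
  fix x assume "x \<in> ThetaSet"
  then show "\<exists>\<delta>>0. \<forall>y\<in>ThetaSet. theta_dist x y < \<delta> \<longrightarrow> theta_p y = theta_p x"
    using theta_coordinates_lipschitz(1) by (intro exI[of _ 1]) auto
qed

lemma measurable_theta_beta [measurable]: "theta_beta j \<in> borel_measurable Theta_M"
  and measurable_theta_t [measurable]: "theta_t j \<in> borel_measurable Theta_M"
  and measurable_theta_alpha [measurable]: "theta_alpha \<in> borel_measurable Theta_M"
  and measurable_theta_s2 [measurable]: "theta_s2 \<in> borel_measurable Theta_M"
  unfolding Theta_M_def
  by (rule measurable_sigma_pm_opens_lipschitz; erule (2) theta_coordinates_lipschitz)+


lemma floor_grid_tendsto: "(\<lambda>n. \<lfloor>real (Suc n) * t\<rfloor> / real (Suc n)) \<longlonglongrightarrow> t"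
proof (rule tendsto_sandwich[of "\<lambda>n. t - 1 / real (Suc n)" _ _ "\<lambda>n. t"])
  have "t - 1 / k \<le> \<lfloor>k * t\<rfloor> / k" if "0 < k" for k :: real
  proof -
    have "t - 1 / k = (k * t - 1) / k"
      using that by (simp add: field_simps)
    also have "\<dots> \<le> \<lfloor>k * t\<rfloor> / k"
      using that real_of_int_floor_gt_diff_one[of "k * t"] by (intro divide_right_mono) auto
    finally show ?thesis .
  qed
  moreover have "\<lfloor>k * t\<rfloor> / k \<le> t" if "0 < k" for k :: real
    using that of_int_floor_le[of "k * t"] by (simp add: divide_le_eq mult.commute)
  ultimately show "\<forall>\<^sub>F n in sequentially. t - 1 / real (Suc n) \<le> \<lfloor>real (Suc n) * t\<rfloor> / real (Suc n)"
    and "\<forall>\<^sub>F n in sequentially. \<lfloor>real (Suc n) * t\<rfloor> / real (Suc n) \<le> t"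
    by simp_all
  show "(\<lambda>n. t - 1 / real (Suc n)) \<longlonglongrightarrow> t"
    using tendsto_diff[OF tendsto_const LIMSEQ_Suc[OF lim_1_over_n], of t] by simp
qed simp

lemma floor_grid_index_in_range:
  assumes "t \<in> {0..1}"
  shows "\<lfloor>real (Suc n) * t\<rfloor> \<in> {0..int (Suc n)}"
proof -
  have "real (Suc n) * t \<le> real (Suc n)"
    using assms by (intro mult_left_le) auto
  then have "\<lfloor>real (Suc n) * t\<rfloor> \<le> int (Suc n)"
    using floor_mono floor_of_nat by metis
  then show ?thesis
    using assms by simp
qed

lemma measurable_continuous_process_at_random_time:
  fixes X :: "'w \<Rightarrow> real \<Rightarrow> real" and \<tau> :: "'x \<Rightarrow> real"
  assumes X: "\<And>t. t \<in> {0..1} \<Longrightarrow> (\<lambda>w. X w t) \<in> borel_measurable M"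
    and cont: "\<And>w. w \<in> space M \<Longrightarrow> continuous_on {0..1} (X w)"
    and \<tau>: "\<tau> \<in> borel_measurable N" "\<And>x. x \<in> space N \<Longrightarrow> \<tau> x \<in> {0..1}"
  shows "(\<lambda>(x, w). X w (\<tau> x)) \<in> borel_measurable (N \<Otimes>\<^sub>M M)"
proof -
  \<comment> \<open>for fixed n the grid point takes finitely many values, at each of which X is measurable\<close>
  let ?grid = "\<lambda>n t. \<lfloor>real (Suc n) * t\<rfloor> / real (Suc n)"
  have "(\<lambda>p. X (snd p) (?grid n (\<tau> (fst p)))) \<in> borel_measurable (N \<Otimes>\<^sub>M M)" for n
  proof -
    have index: "(\<lambda>p. \<lfloor>real (Suc n) * \<tau> (fst p)\<rfloor>) \<in> N \<Otimes>\<^sub>M M \<rightarrow>\<^sub>M count_space {0..int (Suc n)}"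
    proof (rule measurable_count_space_extend[OF subset_UNIV])
      show "(\<lambda>p. \<lfloor>real (Suc n) * \<tau> (fst p)\<rfloor>) \<in> space (N \<Otimes>\<^sub>M M) \<rightarrow> {0..int (Suc n)}"
        using \<tau>(2) floor_grid_index_in_range by (auto simp: space_pair_measure)
      show "(\<lambda>p. \<lfloor>real (Suc n) * \<tau> (fst p)\<rfloor>) \<in> N \<Otimes>\<^sub>M M \<rightarrow>\<^sub>M count_space UNIV"
        using \<tau>(1) by measurable
    qed
    have at_grid_point: "(\<lambda>p. X (snd p) (i / real (Suc n))) \<in> borel_measurable (N \<Otimes>\<^sub>M M)"
      if "i \<in> {0..int (Suc n)}" for i
      using that by (intro measurable_compose[OF measurable_snd X]) (auto simp: field_simps)
    show ?thesis
      using measurable_compose_countable'[OF at_grid_point index] by simp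
  qed
  moreover have "(\<lambda>n. X (snd p) (?grid n (\<tau> (fst p)))) \<longlonglongrightarrow> X (snd p) (\<tau> (fst p))"
    if "p \<in> space (N \<Otimes>\<^sub>M M)" for p
  proof -
    have "\<tau> (fst p) \<in> {0..1}" "snd p \<in> space M"
      using that \<tau>(2) by (auto simp: space_pair_measure)
    moreover have "?grid n (\<tau> (fst p)) \<in> {0..1}" for n
      using floor_grid_index_in_range[OF \<open>\<tau> (fst p) \<in> {0..1}\<close>, of n] by (auto simp: field_simps)
    ultimately show ?thesis
      using continuous_on_tendsto_compose[OF cont floor_grid_tendsto] by auto
  qed
  ultimately show ?thesis
    unfolding case_prod_beta' by (rule borel_measurable_LIMSEQ_real[rotated])
qed

lemma measurable_reg_mean_process:
  assumes X: "\<And>t. t \<in> {0..1} \<Longrightarrow> (\<lambda>w. X w t) \<in> borel_measurable M"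
    and cont: "\<And>w. w \<in> space M \<Longrightarrow> continuous_on {0..1} (X w)"
  shows "(\<lambda>q. reg_mean (fst q) (X (snd q))) \<in> borel_measurable (Theta_M \<Otimes>\<^sub>M M)"
proof -
  have [measurable]: "(\<lambda>q. X (snd q) (theta_t j (fst q))) \<in> borel_measurable (Theta_M \<Otimes>\<^sub>M M)" for j
    using measurable_continuous_process_at_random_time[OF X cont measurable_theta_t theta_t_in_unit_interval]
    by (simp add: case_prod_beta')
  have "(\<lambda>q. theta_alpha (fst q) + (\<Sum>j<theta_p (fst q). theta_beta j (fst q) * X (snd q) (theta_t j (fst q))))
      \<in> borel_measurable (Theta_M \<Otimes>\<^sub>M M)"
    by (rule measurable_compose_countable[where g = "\<lambda>q. theta_p (fst q)"
          and f = "\<lambda>p q. theta_alpha (fst q) + (\<Sum>j<p. theta_beta j (fst q) * X (snd q) (theta_t j (fst q)))"];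
        measurable)
  then show ?thesis
    by (rule measurable_cong[THEN iffD1, rotated])
       (auto simp: space_pair_measure reg_mean_eq_coordinates)
qed

theorem proposition3:
  fixes M :: "'w measure" and X :: "'w \<Rightarrow> real \<Rightarrow> real"
  assumes "prob_space M"
    and "\<And>t. t \<in> {0..1} \<Longrightarrow> (\<lambda>w. X w t) \<in> borel_measurable M"
    and "\<And>t. t \<in> {0..1} \<Longrightarrow> integrable M (\<lambda>w. (X w t)^2)"
    and "\<And>t. t \<in> {0..1} \<Longrightarrow> (\<integral>w. X w t \<partial>M) = 0"
    and "X \<in> M \<rightarrow>\<^sub>M L2M"
    and "\<And>w. w \<in> space M \<Longrightarrow> continuous_on {0..1} (X w)"
    and "A \<in> sets (L2M \<Otimes>\<^sub>M borel)"
  shows "(\<lambda>th. emeasure (P_theta M X th) A) \<in> borel_measurable Theta_M"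
proof -
  interpret prob_space M by fact
  note [measurable] = assms(5)
  have gauss: "(\<lambda>(th, w). gauss (reg_mean th (X w)) (theta_s2 th))
      \<in> Theta_M \<Otimes>\<^sub>M M \<rightarrow>\<^sub>M subprob_algebra borel"
    unfolding case_prod_beta'
  proof (rule measurable_gauss)
    show "(\<lambda>q. reg_mean (fst q) (X (snd q))) \<in> borel_measurable (Theta_M \<Otimes>\<^sub>M M)"
      using assms(2,6) by (rule measurable_reg_mean_process)
    show "(\<lambda>q. theta_s2 (fst q)) \<in> borel_measurable (Theta_M \<Otimes>\<^sub>M M)"
      by (rule measurable_compose[OF measurable_fst measurable_theta_s2])
  qed (auto simp: space_pair_measure ThetaSet_def theta_s2_def)
  have "(\<lambda>(th, w). distr (gauss (reg_mean th (X w)) (theta_s2 th)) (L2M \<Otimes>\<^sub>M borel) (\<lambda>y. (X w, y)))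
      \<in> Theta_M \<Otimes>\<^sub>M M \<rightarrow>\<^sub>M subprob_algebra (L2M \<Otimes>\<^sub>M borel)"
    unfolding case_prod_beta'
  proof (rule measurable_distr2[OF _ gauss[unfolded case_prod_beta']])
    show "(\<lambda>(q, y). (X (snd q), y)) \<in> (Theta_M \<Otimes>\<^sub>M M) \<Otimes>\<^sub>M borel \<rightarrow>\<^sub>M L2M \<Otimes>\<^sub>M borel"
      by measurable
  qed
  then have "P_theta M X \<in> Theta_M \<rightarrow>\<^sub>M subprob_algebra (L2M \<Otimes>\<^sub>M borel)"
    unfolding P_theta_def by (intro measurable_bind'[OF measurable_const[OF M_in_subprob]])
  then show ?thesis
    using assms(7) by measurable
qed

end
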